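(* For every closed loop $c(\widehat{\mathbf{v}})$ moving with the velocity $\widehat{\mathbf{v}}$ of the WCIFS system below, the Kelvin circulation relation holds: $$\frac{d}{dt}\oint_{c(\widehat{\mathbf{v}})}\Big(\widehat{\mathbf{v}}\cdot d\mathbf{x}+\frac{\widetilde{\mu}}{D\rho}\,d\zeta\Big)=\oint_{c(\widehat{\mathbf{v}})}d\varpi-\frac1\rho\,dp.$$
   Context: On a free surface $z=\zeta(\mathbf{x},t)$ over horizontal coordinates $\mathbf{x}=(x,y)$, the wave-current interaction on a free surface (WCIFS) equations, derived from Hamilton's principle, govern the horizontal velocity $\widehat{\mathbf{v}}$, areal density $D$ (constrained to $D=1$ by the non-hydrostatic pressure $p$, so $\mathrm{div}\,\widehat{\mathbf{v}}=0$), buoyancy $\rho$, elevation $\zeta$ and vertical velocity $\widehat{w}$, with gravity $g$ and constant $\epsilon$: $(\partial_t+\mathcal{L}_{\widehat{\mathbf{v}}})(\widehat{\mathbf{v}}\cdot d\mathbf{x}+\widetilde{w}\,d\zeta)=d\varpi-\frac1\rho dp$; $\partial_tD+\mathrm{div}(D\widehat{\mathbf{v}})=0$; $\partial_t\rho+\widehat{\mathbf{v}}\cdot\nabla\rho=0$; $\partial_t\zeta+\widehat{\mathbf{v}}\cdot\nabla\zeta=\widehat{w}(1+\epsilon|\nabla\zeta|^2)$; $\partial_t\widetilde{w}+\widehat{\mathbf{v}}\cdot\nabla\widetilde{w}=-g+\frac{2\epsilon}{D\rho}\mathrm{div}(\widehat{w}\,\widetilde{\mu}\,\nabla\zeta)$,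 where $\varpi=\tfrac12(|\widehat{\mathbf{v}}|^2+\widehat{w}^2)-g\zeta$ and $\widetilde{\mu}=D\rho\widehat{w}/(1+\epsilon|\nabla\zeta|^2)=D\rho\widetilde{w}$. $\mathcal{L}_{\widehat{\mathbf{v}}}$ is the Lie derivative along $\widehat{\mathbf{v}}$. *)

theory Defs
  imports "HOL-Analysis.Analysis"
begin

type_synonym field = "real \<Rightarrow> real^2 \<Rightarrow> real"

definition C1 :: "('a::real_normed_vector \<Rightarrow> 'b::real_normed_vector) \<Rightarrow> bool" where
  "C1 f \<longleftrightarrow> (\<exists>f'. (\<forall>z. (f has_derivative blinfun_apply (f' z)) (at z)) \<and> continuous_on UNIV f')"

definition C1_field :: "field \<Rightarrow> bool" where
  "C1_field F \<longleftrightarrow> C1 (\<lambda>z::real \<times> (real^2). F (fst z) (snd z))"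

definition pdt :: "field \<Rightarrow> field" where
  "pdt F t x = deriv (\<lambda>s. F s x) t"

definition pdx :: "2 \<Rightarrow> field \<Rightarrow> field" where
  "pdx i F t x = deriv (\<lambda>h. F t (x + h *\<^sub>R axis i 1)) 0"

definition vcomp :: "(real \<Rightarrow> real^2 \<Rightarrow> real^2) \<Rightarrow> 2 \<Rightarrow> field" where
  "vcomp v i t x = v t x $ i"

definition gradsq :: "field \<Rightarrow> field" where
  "gradsq F t x = (\<Sum>j\<in>UNIV. (pdx j F t x)^2)"

definition matd :: "(real \<Rightarrow> real^2 \<Rightarrow> real^2) \<Rightarrow> field \<Rightarrow> field" where
  "matd v F t x = pdt F t x + (\<Sum>j\<in>UNIV. v t x $ j * pdx j F t x)"

text \<open>Components of a one-form a = sum_i a_i dx^i; the i-th component of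
  (partial_t + L_v) a is partial_t a_i + v^j partial_j a_i + a_j partial_i v^j.\<close>
definition lie_form :: "(real \<Rightarrow> real^2 \<Rightarrow> real^2) \<Rightarrow> (2 \<Rightarrow> field) \<Rightarrow> 2 \<Rightarrow> field" where
  "lie_form v a i t x = matd v (a i) t x + (\<Sum>j\<in>UNIV. a j t x * pdx i (vcomp v j) t x)"

definition loop_tangent :: "(real \<Rightarrow> real \<Rightarrow> real^2) \<Rightarrow> real \<Rightarrow> real \<Rightarrow> real^2" where
  "loop_tangent c t s = vector_derivative (\<lambda>\<sigma>. c t \<sigma>) (at s)"

definition loop_integral :: "(real \<Rightarrow> real \<Rightarrow> real^2) \<Rightarrow> real \<Rightarrow> (2 \<Rightarrow> field) \<Rightarrow> real" where
  "loop_integral c t a = integral {0..1} (\<lambda>s. \<Sum>i\<in>UNIV. a i t (c t s) * loop_tangent c t s $ i)"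

end

theory Submission
  imports Defs
begin

(* Since \<mu> = D \<rho> wt and D \<rho> \<noteq> 0, the circulation one-form is a = v + wt d\<zeta>, and the
   momentum equation says precisely that (\<partial>t + L_v) a = d vpi - dp/\<rho>.  So the theorem is the
   transport formula d/dt \<integral>_c(t) a = \<integral>_c(t) (\<partial>t + L_v) a for any curve c(t, s) advected by v.
   Differentiating under the integral sign, the only non-routine point is the evolution of the
   tangent: \<partial>t \<partial>s c = \<partial>s (v(t, c)) = (\<partial>s c \<cdot> \<nabla>) v by equality of mixed partials, and this
   produces the term a_j \<partial>_i v^j of the Lie derivative.  The formula holds for open curves as
   well. *)

lemma has_vector_derivative_compose_blinfun:
  assumes "(\<gamma> has_vector_derivative \<gamma>') (at \<sigma>)"
    and "(f has_derivative blinfun_apply L) (at (\<gamma> \<sigma>))"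
  shows "((\<lambda>\<sigma>. f (\<gamma> \<sigma>)) has_vector_derivative L \<gamma>') (at \<sigma>)"
  using has_derivative_compose[OF assms(1)[unfolded has_vector_derivative_def] assms(2)]
  by (simp add: has_vector_derivative_def blinfun.scaleR_right)

lemma has_real_derivative_vec_nth:
  "(f has_vector_derivative f') F \<Longrightarrow> ((\<lambda>x. f x $ i) has_real_derivative f' $ i) F"
  unfolding has_real_derivative_iff_has_vector_derivative
  by (rule bounded_linear.has_vector_derivative[OF bounded_linear_vec_nth])

lemma continuous_on_compose_uncurried:
  assumes "continuous_on UNIV (\<lambda>z. G (fst z) (snd z))"
    and "continuous_on S a" and "continuous_on S b"
  shows "continuous_on S (\<lambda>z. G (a z) (b z))"
  using continuous_on_compose2[OF assms(1), of S "\<lambda>z. (a z, b z)"] assms(2,3)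
  by (auto intro: continuous_on_Pair)

lemma partial_increment_eq_integral:
  fixes f u w q :: "real \<Rightarrow> real \<Rightarrow> real"
  assumes ft: "\<And>t s. ((\<lambda>t. f t s) has_real_derivative u t s) (at t)"
    and fs: "\<And>t s. ((\<lambda>s. f t s) has_real_derivative w t s) (at s)"
    and us: "\<And>t s. ((\<lambda>s. u t s) has_real_derivative q t s) (at s)"
    and uc: "\<And>s. continuous_on UNIV (\<lambda>t. u t s)"
    and qc: "continuous_on UNIV (\<lambda>z. q (fst z) (snd z))"
    and "a \<le> b"
  shows "w b s - w a s = integral {a..b} (\<lambda>r. q r s)"
proof -
  have ftc: "f b s' - f a s' = integral {a..b} (\<lambda>r. u r s')" for s'
    using fundamental_theorem_of_calculus[OF \<open>a \<le> b\<close>, of "\<lambda>r. f r s'" "\<lambda>r. u r s'"] ft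
    by (simp add: has_real_derivative_iff_has_vector_derivative[symmetric]
        has_field_derivative_at_within integral_unique)
  have "((\<lambda>s'. integral (cbox a b) (\<lambda>r. u r s')) has_field_derivative integral (cbox a b) (\<lambda>r. q r s))
      (at s within UNIV)"
  proof (rule leibniz_rule_field_derivative)
    show "(\<lambda>r. u r s') integrable_on cbox a b" for s'
      by (rule integrable_continuous) (rule continuous_on_subset[OF uc], simp)
    have "continuous_on UNIV (\<lambda>z::real \<times> real. q (snd z) (fst z))"
      by (rule continuous_on_compose_uncurried[OF qc]) (auto intro: continuous_intros)
    then show "continuous_on (UNIV \<times> cbox a b) (\<lambda>(s', r). q r s')"
      by (auto simp: case_prod_beta intro: continuous_on_subset)
  qed (use us in auto)
  then have "((\<lambda>s'. f b s' - f a s') has_real_derivative integral {a..b} (\<lambda>r. q r s)) (at s)"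
    by (simp add: ftc)
  with fs show ?thesis
    by (metis DERIV_diff DERIV_unique)
qed

lemma mixed_partials_commute:
  fixes f u w q :: "real \<Rightarrow> real \<Rightarrow> real"
  assumes "\<And>t s. ((\<lambda>t. f t s) has_real_derivative u t s) (at t)"
    and "\<And>t s. ((\<lambda>s. f t s) has_real_derivative w t s) (at s)"
    and "\<And>t s. ((\<lambda>s. u t s) has_real_derivative q t s) (at s)"
    and "\<And>s. continuous_on UNIV (\<lambda>t. u t s)"
    and qc: "continuous_on UNIV (\<lambda>z. q (fst z) (snd z))"
  shows "((\<lambda>t. w t s) has_real_derivative q t s) (at t)"
proof -
  have "continuous_on UNIV (\<lambda>r. q r s)"
    by (rule continuous_on_compose_uncurried[OF qc]) (auto intro: continuous_intros)
  then have "((\<lambda>\<tau>. integral {t - 1..\<tau>} (\<lambda>r. q r s)) has_real_derivative q t s) (at t within {t - 1..t + 1})"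
    by (intro integral_has_real_derivative) (auto intro: continuous_on_subset)
  then have "((\<lambda>\<tau>. w (t - 1) s + integral {t - 1..\<tau>} (\<lambda>r. q r s)) has_real_derivative q t s) (at t)"
    by (auto simp: at_within_Icc_at intro!: derivative_eq_intros)
  then show ?thesis
  proof (rule has_field_derivative_transform_within_open[where S = "{t - 1<..}"])
    show "w (t - 1) s + integral {t - 1..\<tau>} (\<lambda>r. q r s) = w \<tau> s" if "\<tau> \<in> {t - 1<..}" for \<tau>
      using partial_increment_eq_integral[OF assms, of "t - 1" \<tau> s] that by simp
  qed auto
qed

lemma C1_continuous_on: "C1 f \<Longrightarrow> continuous_on UNIV f"
  unfolding C1_def by (meson continuous_at_imp_continuous_on has_derivative_continuous)

lemma C1_add:
  fixes f g :: "'a::real_normed_vector \<Rightarrow> 'b::real_normed_vector"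
  assumes "C1 f" and "C1 g"
  shows "C1 (\<lambda>z. f z + g z)"
proof -
  obtain f' g' where "\<And>z. (f has_derivative blinfun_apply (f' z)) (at z)" "continuous_on UNIV f'"
    and "\<And>z. (g has_derivative blinfun_apply (g' z)) (at z)" "continuous_on UNIV g'"
    using assms unfolding C1_def by blast
  then show ?thesis
    unfolding C1_def
    by (intro exI[of _ "\<lambda>z. f' z + g' z"])
      (auto simp: blinfun.add_left intro!: derivative_eq_intros continuous_intros)
qed

lemma C1_mult:
  fixes f g :: "'a::real_normed_vector \<Rightarrow> real"
  assumes "C1 f" and "C1 g"
  shows "C1 (\<lambda>z. f z * g z)"
proof -
  obtain f' g' where "\<And>z. (f has_derivative blinfun_apply (f' z)) (at z)" "continuous_on UNIV f'"
    and "\<And>z. (g has_derivative blinfun_apply (g' z)) (at z)" "continuous_on UNIV g'"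
    using assms unfolding C1_def by blast
  moreover have "continuous_on UNIV f" "continuous_on UNIV g"
    using assms by (simp_all add: C1_continuous_on)
  ultimately show ?thesis
    unfolding C1_def
    by (intro exI[of _ "\<lambda>z. f z *\<^sub>R g' z + g z *\<^sub>R f' z"])
      (auto simp: blinfun.add_left blinfun.scaleR_left fun_eq_iff mult.commute intro!: derivative_eq_intros continuous_intros)
qed

lemma C1_field_add: "C1_field F \<Longrightarrow> C1_field G \<Longrightarrow> C1_field (\<lambda>t x. F t x + G t x)"
  unfolding C1_field_def by (rule C1_add)

lemma C1_field_mult: "C1_field F \<Longrightarrow> C1_field G \<Longrightarrow> C1_field (\<lambda>t x. F t x * G t x)"
  unfolding C1_field_def by (rule C1_mult)

lemma C1_field_partials:
  assumes "C1_field F"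
  obtains F' where "\<And>z. ((\<lambda>z. F (fst z) (snd z)) has_derivative blinfun_apply (F' z)) (at z)"
    and "continuous_on UNIV F'"
    and "\<And>t x. pdt F t x = F' (t, x) (1, 0)"
    and "\<And>j t x. pdx j F t x = F' (t, x) (0, axis j 1)"
proof -
  obtain F' where dF: "\<And>z. ((\<lambda>z. F (fst z) (snd z)) has_derivative blinfun_apply (F' z)) (at z)"
    and "continuous_on UNIV F'"
    using assms unfolding C1_field_def C1_def by blast
  moreover have "pdt F t x = F' (t, x) (1, 0)" for t x
  proof -
    have "((\<lambda>s. (s, x)) has_vector_derivative (1, 0)) (at t)"
      by (auto intro!: derivative_eq_intros)
    from has_vector_derivative_compose_blinfun[OF this dF] show ?thesis
      unfolding pdt_def has_real_derivative_iff_has_vector_derivative[symmetric]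
      by (simp add: DERIV_imp_deriv)
  qed
  moreover have "pdx j F t x = F' (t, x) (0, axis j 1)" for j t x
  proof -
    have "((\<lambda>h. (t, x + h *\<^sub>R axis j 1)) has_vector_derivative (0, axis j 1)) (at 0)"
      by (auto intro!: derivative_eq_intros)
    from has_vector_derivative_compose_blinfun[OF this dF] show ?thesis
      unfolding pdx_def has_real_derivative_iff_has_vector_derivative[symmetric]
      by (simp add: DERIV_imp_deriv)
  qed
  ultimately show thesis
    using that by blast
qed

lemma continuous_on_C1_field: "C1_field F \<Longrightarrow> continuous_on UNIV (\<lambda>z. F (fst z) (snd z))"
  unfolding C1_field_def by (rule C1_continuous_on)

lemma continuous_on_pdt: "C1_field F \<Longrightarrow> continuous_on UNIV (\<lambda>z. pdt F (fst z) (snd z))"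
  by (erule C1_field_partials) (simp add: continuous_intros)

lemma continuous_on_pdx: "C1_field F \<Longrightarrow> continuous_on UNIV (\<lambda>z. pdx j F (fst z) (snd z))"
  by (erule C1_field_partials) (simp add: continuous_intros)

lemma blinfun_apply_pair_real_vec2:
  fixes L :: "(real \<times> (real^2)) \<Rightarrow>\<^sub>L real"
  shows "blinfun_apply L (a, y) = a * blinfun_apply L (1, 0) + (\<Sum>j\<in>UNIV. y $ j * blinfun_apply L (0, axis j 1))"
proof -
  have "(a, y) = a *\<^sub>R (1, 0) + (y $ 1) *\<^sub>R (0, axis 1 1) + (y $ 2) *\<^sub>R (0, axis 2 1)"
    by (auto simp: vec_eq_iff axis_def forall_2)
  then have "blinfun_apply L (a, y) =
      blinfun_apply L (a *\<^sub>R (1, 0) + (y $ 1) *\<^sub>R (0, axis 1 1) + (y $ 2) *\<^sub>R (0, axis 2 1))"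
    by (rule arg_cong)
  then show ?thesis
    by (simp only: sum_2 blinfun.add_right blinfun.scaleR_right) simp
qed

lemma C1_field_chain_rule:
  assumes "C1_field F"
    and "(\<alpha> has_real_derivative a') (at \<sigma>)" and "(y has_vector_derivative y') (at \<sigma>)"
  shows "((\<lambda>\<sigma>. F (\<alpha> \<sigma>) (y \<sigma>)) has_real_derivative
      a' * pdt F (\<alpha> \<sigma>) (y \<sigma>) + (\<Sum>j\<in>UNIV. y' $ j * pdx j F (\<alpha> \<sigma>) (y \<sigma>))) (at \<sigma>)"
proof -
  obtain F' where dF: "\<And>z. ((\<lambda>z. F (fst z) (snd z)) has_derivative blinfun_apply (F' z)) (at z)"
    and "continuous_on UNIV F'"
    and pdt: "\<And>t x. pdt F t x = F' (t, x) (1, 0)"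
    and pdx: "\<And>j t x. pdx j F t x = F' (t, x) (0, axis j 1)"
    using C1_field_partials[OF assms(1)] by blast
  have curve: "((\<lambda>\<sigma>. (\<alpha> \<sigma>, y \<sigma>)) has_vector_derivative (a', y')) (at \<sigma>)"
    using assms(2,3) by (auto simp: has_real_derivative_iff_has_vector_derivative intro!: derivative_intros)
  have "((\<lambda>\<sigma>. F (\<alpha> \<sigma>) (y \<sigma>)) has_vector_derivative F' (\<alpha> \<sigma>, y \<sigma>) (a', y')) (at \<sigma>)"
    using has_vector_derivative_compose_blinfun[OF curve dF] by simp
  then show ?thesis
    by (simp add: has_real_derivative_iff_has_vector_derivative blinfun_apply_pair_real_vec2[of _ a' y'] pdt pdx)
qed

lemma C1_loop_tangent:
  assumes "C1 (\<lambda>z::real \<times> real. c (fst z) (snd z))"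
  shows "((\<lambda>s. c t s) has_vector_derivative loop_tangent c t s) (at s)"
    and "continuous_on UNIV (\<lambda>z. loop_tangent c (fst z) (snd z))"
proof -
  obtain C' where dC: "\<And>z. ((\<lambda>z. c (fst z) (snd z)) has_derivative blinfun_apply (C' z)) (at z)"
    and "continuous_on UNIV C'"
    using assms unfolding C1_def by blast
  have dc: "((\<lambda>s. c t s) has_vector_derivative C' (t, s) (0, 1)) (at s)" for t s
  proof -
    have "((\<lambda>s. (t, s)) has_vector_derivative (0, 1)) (at s)"
      by (auto intro!: derivative_eq_intros)
    from has_vector_derivative_compose_blinfun[OF this dC] show ?thesis
      by simp
  qed
  then have "loop_tangent c t s = C' (t, s) (0, 1)" for t s
    unfolding loop_tangent_def by (rule vector_derivative_at)
  with dc \<open>continuous_on UNIV C'\<close>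
  show "((\<lambda>s. c t s) has_vector_derivative loop_tangent c t s) (at s)"
    and "continuous_on UNIV (\<lambda>z. loop_tangent c (fst z) (snd z))"
    by (simp_all add: continuous_intros)
qed

lemma continuous_on_vec_nth_field:
  "C1_field (vcomp v j) \<Longrightarrow> continuous_on UNIV (\<lambda>z. v (fst z) (snd z) $ j)"
  using continuous_on_C1_field[of "vcomp v j"] by (simp add: vcomp_def)

lemma continuous_on_lie_form:
  assumes "\<And>i. C1_field (a i)" and "\<And>j. C1_field (vcomp v j)"
  shows "continuous_on UNIV (\<lambda>z. lie_form v a i (fst z) (snd z))"
  unfolding lie_form_def matd_def
  using assms by (intro continuous_intros continuous_on_C1_field continuous_on_pdt continuous_on_pdx
      continuous_on_vec_nth_field)

lemma loop_tangent_has_real_derivative: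
  assumes v: "\<And>j. C1_field (vcomp v j)"
    and c: "C1 (\<lambda>z::real \<times> real. c (fst z) (snd z))"
    and moves: "\<And>t s. ((\<lambda>\<tau>. c \<tau> s) has_vector_derivative v t (c t s)) (at t)"
  shows "((\<lambda>t. loop_tangent c t s $ i) has_real_derivative
           (\<Sum>j\<in>UNIV. loop_tangent c t s $ j * pdx j (vcomp v i) t (c t s))) (at t)"
proof (rule mixed_partials_commute[where f = "\<lambda>t s. c t s $ i" and u = "\<lambda>t s. vcomp v i t (c t s)"
      and w = "\<lambda>t s. loop_tangent c t s $ i"])
  show "((\<lambda>t. c t s $ i) has_real_derivative vcomp v i t (c t s)) (at t)" for t s
    using has_real_derivative_vec_nth[OF moves] by (simp add: vcomp_def)
  show "((\<lambda>s. c t s $ i) has_real_derivative loop_tangent c t s $ i) (at s)" for t s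
    by (rule has_real_derivative_vec_nth[OF C1_loop_tangent(1)[OF c]])
  show "((\<lambda>s. vcomp v i t (c t s)) has_real_derivative
      (\<Sum>j\<in>UNIV. loop_tangent c t s $ j * pdx j (vcomp v i) t (c t s))) (at s)" for t s
    using C1_field_chain_rule[OF v DERIV_const C1_loop_tangent(1)[OF c]] by simp
  have cc: "continuous_on UNIV (\<lambda>z. c (fst z) (snd z))"
    using c by (rule C1_continuous_on)
  show "continuous_on UNIV (\<lambda>t. vcomp v i t (c t s))" for s
  proof (rule continuous_on_compose_uncurried[OF continuous_on_C1_field[OF v]])
    show "continuous_on UNIV (\<lambda>t. c t s)"
      by (rule continuous_on_compose_uncurried[OF cc]) (auto intro: continuous_intros)
  qed (auto intro: continuous_intros)
  show "continuous_on UNIV (\<lambda>z. \<Sum>j\<in>UNIV. loop_tangent c (fst z) (snd z) $ j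
      * pdx j (vcomp v i) (fst z) (c (fst z) (snd z)))"
    by (intro continuous_intros continuous_on_component C1_loop_tangent(2)[OF c]
        continuous_on_compose_uncurried[OF continuous_on_pdx[OF v] _ cc])
qed

lemma loop_integrand_has_real_derivative:
  assumes a: "\<And>i. C1_field (a i)" and v: "\<And>j. C1_field (vcomp v j)"
    and c: "C1 (\<lambda>z::real \<times> real. c (fst z) (snd z))"
    and moves: "\<And>t s. ((\<lambda>\<tau>. c \<tau> s) has_vector_derivative v t (c t s)) (at t)"
  shows "((\<lambda>t. \<Sum>i\<in>UNIV. a i t (c t s) * loop_tangent c t s $ i) has_real_derivative
           (\<Sum>i\<in>UNIV. lie_form v a i t (c t s) * loop_tangent c t s $ i)) (at t)"
proof -
  have da: "((\<lambda>t. a i t (c t s)) has_real_derivative matd v (a i) t (c t s)) (at t)" for i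
    using C1_field_chain_rule[OF a DERIV_ident moves] by (simp add: matd_def)
  have "((\<lambda>t. a i t (c t s) * loop_tangent c t s $ i) has_real_derivative
      matd v (a i) t (c t s) * loop_tangent c t s $ i
      + a i t (c t s) * (\<Sum>j\<in>UNIV. loop_tangent c t s $ j * pdx j (vcomp v i) t (c t s))) (at t)" for i
    using DERIV_mult[OF da loop_tangent_has_real_derivative[OF v c moves, of s i]] by (simp add: ac_simps)
  then have "((\<lambda>t. \<Sum>i\<in>UNIV. a i t (c t s) * loop_tangent c t s $ i) has_real_derivative
      (\<Sum>i\<in>UNIV. matd v (a i) t (c t s) * loop_tangent c t s $ i
         + a i t (c t s) * (\<Sum>j\<in>UNIV. loop_tangent c t s $ j * pdx j (vcomp v i) t (c t s)))) (at t)"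
    by (rule DERIV_sum)
  also have "(\<Sum>i\<in>UNIV. matd v (a i) t (c t s) * loop_tangent c t s $ i
         + a i t (c t s) * (\<Sum>j\<in>UNIV. loop_tangent c t s $ j * pdx j (vcomp v i) t (c t s)))
      = (\<Sum>i\<in>UNIV. lie_form v a i t (c t s) * loop_tangent c t s $ i)"
    by (simp add: lie_form_def sum_2 algebra_simps)
  finally show ?thesis .
qed

lemma loop_integral_has_real_derivative:
  assumes a: "\<And>i. C1_field (a i)" and v: "\<And>j. C1_field (vcomp v j)"
    and c: "C1 (\<lambda>z::real \<times> real. c (fst z) (snd z))"
    and moves: "\<And>t s. ((\<lambda>\<tau>. c \<tau> s) has_vector_derivative v t (c t s)) (at t)"
  shows "((\<lambda>t. loop_integral c t a) has_real_derivative loop_integral c t (lie_form v a)) (at t)"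
proof -
  define h where "h t s = (\<Sum>i\<in>UNIV. a i t (c t s) * loop_tangent c t s $ i)" for t s
  define h' where "h' t s = (\<Sum>i\<in>UNIV. lie_form v a i t (c t s) * loop_tangent c t s $ i)" for t s
  have cc: "continuous_on UNIV (\<lambda>z. c (fst z) (snd z))"
    using c by (rule C1_continuous_on)
  have "continuous_on UNIV (\<lambda>z. h (fst z) (snd z))"
    unfolding h_def
    by (intro continuous_intros continuous_on_component C1_loop_tangent(2)[OF c]
        continuous_on_compose_uncurried[OF continuous_on_C1_field[OF a] _ cc])
  from continuous_on_compose_uncurried[OF this, of "cbox 0 1" "\<lambda>_. t" "\<lambda>s. s" for t]
  have "h t integrable_on cbox 0 1" for t
    by (intro integrable_continuous) (simp add: continuous_on_const continuous_on_id)
  moreover have "continuous_on UNIV (\<lambda>z. h' (fst z) (snd z))"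
    unfolding h'_def
    by (intro continuous_intros continuous_on_component C1_loop_tangent(2)[OF c]
        continuous_on_compose_uncurried[OF continuous_on_lie_form[OF a v] _ cc])
  moreover have "((\<lambda>t. h t s) has_field_derivative h' t s) (at t within UNIV)" for t s
    using loop_integrand_has_real_derivative[OF a v c moves] by (simp add: h_def h'_def)
  ultimately have "((\<lambda>t. integral (cbox 0 1) (h t)) has_field_derivative integral (cbox 0 1) (h' t))
      (at t within UNIV)"
    by (intro leibniz_rule_field_derivative) (auto simp: case_prod_beta intro: continuous_on_subset)
  then show ?thesis
    unfolding loop_integral_def h_def[abs_def] h'_def[abs_def] by simp
qed

theorem mainTheorem5:
  fixes v :: "real \<Rightarrow> real^2 \<Rightarrow> real^2"
    and D \<rho> \<zeta> wh wt p \<mu> vpi :: field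
    and g \<epsilon> :: real
    and c :: "real \<Rightarrow> real \<Rightarrow> real^2"
  assumes reg_v: "\<And>j. C1_field (vcomp v j)"
    and reg_D: "C1_field D" and reg_rho: "C1_field \<rho>"
    and reg_zeta: "C1_field \<zeta>" and reg_gzeta: "\<And>i. C1_field (pdx i \<zeta>)"
    and reg_wh: "C1_field wh" and reg_wt: "C1_field wt" and reg_mu: "C1_field \<mu>"
    and reg_p: "C1_field p"
    and rho_nz: "\<And>t x. \<rho> t x \<noteq> 0"
    and D_one: "\<And>t x. D t x = 1"
    and vpi_def: "\<And>t x. vpi t x = ((\<Sum>j\<in>UNIV. (v t x $ j)^2) + (wh t x)^2) / 2 - g * \<zeta> t x"
    and mu_def: "\<And>t x. \<mu> t x = D t x * \<rho> t x * wh t x / (1 + \<epsilon> * gradsq \<zeta> t x)"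
    and mu_wt: "\<And>t x. \<mu> t x = D t x * \<rho> t x * wt t x"
    and momentum: "\<And>i t x. lie_form v (\<lambda>j t x. v t x $ j + wt t x * pdx j \<zeta> t x) i t x
                     = pdx i vpi t x - 1 / \<rho> t x * pdx i p t x"
    and continuity: "\<And>t x. pdt D t x + (\<Sum>j\<in>UNIV. pdx j (\<lambda>t x. D t x * v t x $ j) t x) = 0"
    and buoyancy: "\<And>t x. matd v \<rho> t x = 0"
    and kinematic: "\<And>t x. matd v \<zeta> t x = wh t x * (1 + \<epsilon> * gradsq \<zeta> t x)"
    and vertical: "\<And>t x. matd v wt t x = - g + 2 * \<epsilon> / (D t x * \<rho> t x) *
                     (\<Sum>j\<in>UNIV. pdx j (\<lambda>t x. wh t x * \<mu> t x * pdx j \<zeta> t x) t x)"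
    and loop_reg: "C1 (\<lambda>z::real \<times> real. c (fst z) (snd z))"
    and loop_closed: "\<And>t. c t 0 = c t 1"
    and loop_moves: "\<And>t s. ((\<lambda>\<tau>. c \<tau> s) has_vector_derivative v t (c t s)) (at t)"
  shows "\<And>t. ((\<lambda>t. loop_integral c t (\<lambda>i t x. v t x $ i + \<mu> t x / (D t x * \<rho> t x) * pdx i \<zeta> t x))
            has_real_derivative
            loop_integral c t (\<lambda>i t x. pdx i vpi t x - 1 / \<rho> t x * pdx i p t x)) (at t)"
proof -
  define a where "a = (\<lambda>i t x. v t x $ i + wt t x * pdx i \<zeta> t x)"
  have a_C1: "C1_field (a i)" for i
    unfolding a_def
    by (intro C1_field_add C1_field_mult reg_v[unfolded vcomp_def[abs_def]] reg_wt reg_gzeta)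
  have circulation_form: "(\<lambda>i t x. v t x $ i + \<mu> t x / (D t x * \<rho> t x) * pdx i \<zeta> t x) = a"
    using mu_wt D_one rho_nz by (simp add: a_def fun_eq_iff)
  have momentum_form: "(\<lambda>i t x. pdx i vpi t x - 1 / \<rho> t x * pdx i p t x) = lie_form v a"
    using momentum by (simp add: a_def fun_eq_iff)
  show "?thesis t" for t
    unfolding circulation_form momentum_form
    by (rule loop_integral_has_real_derivative[OF a_C1 reg_v loop_reg loop_moves])
qed

end
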